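(* For every series-parallel rational expression $e$ there exists a pomset automaton $A$ that is well-nested and finitely supported and has a state $q_e$ such that $L_A(q_e)=[\![e]\!]$.
   Context: Fix a finite alphabet $\Sigma$. A pomset is an isomorphism class of labelled posets $\langle C, \leq, \lambda\rangle$ with $\lambda: C \to \Sigma$; $1$ is the empty pomset and $a\in\Sigma$ the one-point pomset labelled $a$. Sequential composition $U\cdot V$ puts the two (disjoint) pomsets side by side with every element of $U$ below every element of $V$; parallel composition $U\parallel V$ is the disjoint union without extra order. $\mathsf{Pom}^{\mathsf{sp}}$ is the smallest set of pomsets containing $1$ and all $a\in\Sigma$, closed under $\cdot$ and $\parallel$. For pomset languages, $\mathcal U\cdot\mathcal V$ and $\mathcal U\parallel\mathcal V$ are pointwise, $\mathcal U^*=\bigcup_n\mathcal U^n$, $\mathcal U^\dagger=\bigcup_n\mathcal U^{(n)}$ with $\mathcal U^0=\mathcal U^{(0)}=\{1\}$, $\mathcal U^{n+1}=\mathcal U\cdot\mathcal U^n$, $\mathcal U^{(n+1)}=\mathcal U\parallel\mathcal U^{(n)}$. Spr-expressions: $e,f ::= 0 \mid 1 \mid a\in\Sigma \mid e+f \mid e\cdot f \mid e\parallel f \mid e^* \mid e^\dagger$, with $[\![0]\!]=\emptyset$, $[\![1]\!]=\{1\}$, $[\![a]\!]=\{a\}$, and $+,\cdot,\parallel,{}^*,{}^\dagger$ interpreted as union and the language operations above. A PA is $A=\langle Q,\delta,\gamma,F\rangle$ with $F\subseteq Q$, $\delta:Q\times\Sigma\to Q$, $\gamma:Q^3\to Q$,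 containing states $\bot\notin F$, $\top\in F$ with $\delta(\bot,a)=\delta(\top,a)=\bot$, $\gamma(\bot,r,s)=\gamma(\top,r,s)=\bot$. Traces: the smallest relation with $q\xrightarrow{1}_A q$; $q\xrightarrow{a}_A\delta(q,a)$; $q\xrightarrow{U}_A q''\xrightarrow{V}_A q'$ implies $q\xrightarrow{U\cdot V}_A q'$; $r\xrightarrow{U}_A r'\in F$ and $s\xrightarrow{V}_A s'\in F$ imply $q\xrightarrow{U\parallel V}_A\gamma(q,r,s)$. $L_A(q)=\{U:\exists q'\in F.\ q\xrightarrow{U}_A q'\}$. $\preceq_A$ is the smallest preorder on $Q$ with $r,s\preceq_A q$ when $\gamma(q,r,s)\neq\bot$, $\delta(q,a)\preceq_A q$, and $\gamma(q,r,s)\preceq_A q$; $q\prec_A q'$ iff $q\preceq_A q'$ and $q'\not\preceq_A q$. $\pi_A(q)$ is the smallest $\preceq_A$-downward-closed set containing $q$; $A$ is finitely supported if all $\pi_A(q)$ are finite. A state $q$ is sequential if $\gamma(q,r,s)\neq\bot$ implies $r,s\prec_A q$; $q\in F$ is recursive if it is not sequential, $\delta(q,a)=\bot$ for all $a$, and $\gamma(q,r,s)\neq\bot$ implies $s=q$, $r\prec_A q$, $\gamma(q,r,s)=\top$. $A$ is well-nested if each state is sequential or recursive. *)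

theory Defs
  imports Main
begin

text \<open>A labelled poset with carrier drawn from nat: (carrier, order, labelling).
  The labelling is irrelevant outside the carrier.\<close>
type_synonym 'a lposet = "nat set \<times> (nat \<times> nat) set \<times> (nat \<Rightarrow> 'a)"

definition lp_carrier :: "'a lposet \<Rightarrow> nat set" where
  "lp_carrier X = fst X"
definition lp_order :: "'a lposet \<Rightarrow> (nat \<times> nat) set" where
  "lp_order X = fst (snd X)"
definition lp_label :: "'a lposet \<Rightarrow> nat \<Rightarrow> 'a" where
  "lp_label X = snd (snd X)"

definition wf_lp :: "'a lposet \<Rightarrow> bool" where
  "wf_lp X \<longleftrightarrow> finite (lp_carrier X)
     \<and> lp_order X \<subseteq> lp_carrier X \<times> lp_carrier X
     \<and> (\<forall>x\<in>lp_carrier X. (x, x) \<in> lp_order X)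
     \<and> (\<forall>x y. (x, y) \<in> lp_order X \<and> (y, x) \<in> lp_order X \<longrightarrow> x = y)
     \<and> trans (lp_order X)"

definition lp_iso :: "'a lposet \<Rightarrow> 'a lposet \<Rightarrow> bool" where
  "lp_iso X Y \<longleftrightarrow> (\<exists>f. bij_betw f (lp_carrier X) (lp_carrier Y)
     \<and> (\<forall>x\<in>lp_carrier X. \<forall>y\<in>lp_carrier X.
          (x, y) \<in> lp_order X \<longleftrightarrow> (f x, f y) \<in> lp_order Y)
     \<and> (\<forall>x\<in>lp_carrier X. lp_label Y (f x) = lp_label X x))"

definition lp_empty :: "'a lposet" where
  "lp_empty = ({}, {}, (\<lambda>_. undefined))"

definition lp_atom :: "'a \<Rightarrow> 'a lposet" where
  "lp_atom a = ({0}, {(0, 0)}, (\<lambda>_. a))"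

text \<open>Disjoint union: left copy on even numbers, right copy on odd numbers.\<close>
definition lp_par :: "'a lposet \<Rightarrow> 'a lposet \<Rightarrow> 'a lposet" where
  "lp_par X Y =
     ((\<lambda>n. 2 * n) ` lp_carrier X \<union> (\<lambda>n. 2 * n + 1) ` lp_carrier Y,
      (\<lambda>(x, y). (2 * x, 2 * y)) ` lp_order X \<union> (\<lambda>(x, y). (2 * x + 1, 2 * y + 1)) ` lp_order Y,
      (\<lambda>n. if even n then lp_label X (n div 2) else lp_label Y (n div 2)))"

definition lp_seq :: "'a lposet \<Rightarrow> 'a lposet \<Rightarrow> 'a lposet" where
  "lp_seq X Y =
     (lp_carrier (lp_par X Y),
      lp_order (lp_par X Y) \<union> {(2 * x, 2 * y + 1) | x y. x \<in> lp_carrier X \<and> y \<in> lp_carrier Y},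
      lp_label (lp_par X Y))"

text \<open>Pomsets: isomorphism classes of (finite) labelled posets.\<close>
typedef 'a pomset = "{C :: 'a lposet set. \<exists>X. wf_lp X \<and> C = {Y. wf_lp Y \<and> lp_iso X Y}}"
proof -
  have "wf_lp (({}, {}, \<lambda>_. undefined) :: 'a lposet)"
    by (simp add: wf_lp_def lp_carrier_def lp_order_def trans_def)
  then show ?thesis by blast
qed

definition pom :: "'a lposet \<Rightarrow> 'a pomset" where
  "pom X = Abs_pomset {Y. wf_lp Y \<and> lp_iso X Y}"

definition pom_rep :: "'a pomset \<Rightarrow> 'a lposet" where
  "pom_rep P = (SOME X. X \<in> Rep_pomset P)"

definition pom_one :: "'a pomset" where
  "pom_one = pom lp_empty"

definition pom_atom :: "'a \<Rightarrow> 'a pomset" where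
  "pom_atom a = pom (lp_atom a)"

definition pom_seq :: "'a pomset \<Rightarrow> 'a pomset \<Rightarrow> 'a pomset" where
  "pom_seq U V = pom (lp_seq (pom_rep U) (pom_rep V))"

definition pom_par :: "'a pomset \<Rightarrow> 'a pomset \<Rightarrow> 'a pomset" where
  "pom_par U V = pom (lp_par (pom_rep U) (pom_rep V))"

definition lang_seq :: "'a pomset set \<Rightarrow> 'a pomset set \<Rightarrow> 'a pomset set" where
  "lang_seq L M = {pom_seq U V | U V. U \<in> L \<and> V \<in> M}"

definition lang_par :: "'a pomset set \<Rightarrow> 'a pomset set \<Rightarrow> 'a pomset set" where
  "lang_par L M = {pom_par U V | U V. U \<in> L \<and> V \<in> M}"

primrec lang_seq_pow :: "'a pomset set \<Rightarrow> nat \<Rightarrow> 'a pomset set" where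
  "lang_seq_pow L 0 = {pom_one}"
| "lang_seq_pow L (Suc n) = lang_seq L (lang_seq_pow L n)"

primrec lang_par_pow :: "'a pomset set \<Rightarrow> nat \<Rightarrow> 'a pomset set" where
  "lang_par_pow L 0 = {pom_one}"
| "lang_par_pow L (Suc n) = lang_par L (lang_par_pow L n)"

definition lang_star :: "'a pomset set \<Rightarrow> 'a pomset set" where
  "lang_star L = (\<Union>n. lang_seq_pow L n)"

definition lang_dagger :: "'a pomset set \<Rightarrow> 'a pomset set" where
  "lang_dagger L = (\<Union>n. lang_par_pow L n)"

datatype 'a spr = Zero | One | Atom 'a | Plus "'a spr" "'a spr" | Seq "'a spr" "'a spr"
  | Par "'a spr" "'a spr" | Star "'a spr" | Dagger "'a spr"

primrec sem :: "'a spr \<Rightarrow> 'a pomset set" where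
  "sem Zero = {}"
| "sem One = {pom_one}"
| "sem (Atom a) = {pom_atom a}"
| "sem (Plus e f) = sem e \<union> sem f"
| "sem (Seq e f) = lang_seq (sem e) (sem f)"
| "sem (Par e f) = lang_par (sem e) (sem f)"
| "sem (Star e) = lang_star (sem e)"
| "sem (Dagger e) = lang_dagger (sem e)"

record ('q, 'a) pa =
  states :: "'q set"
  delta :: "'q \<Rightarrow> 'a \<Rightarrow> 'q"
  gamma :: "'q \<Rightarrow> 'q \<Rightarrow> 'q \<Rightarrow> 'q"
  final :: "'q set"
  bot :: 'q
  top :: 'q

definition is_pa :: "('q, 'a) pa \<Rightarrow> bool" where
  "is_pa A \<longleftrightarrow> final A \<subseteq> states A
     \<and> bot A \<in> states A \<and> top A \<in> states A
     \<and> bot A \<notin> final A \<and> top A \<in> final A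
     \<and> (\<forall>q\<in>states A. \<forall>a. delta A q a \<in> states A)
     \<and> (\<forall>q\<in>states A. \<forall>r\<in>states A. \<forall>s\<in>states A. gamma A q r s \<in> states A)
     \<and> (\<forall>a. delta A (bot A) a = bot A \<and> delta A (top A) a = bot A)
     \<and> (\<forall>r\<in>states A. \<forall>s\<in>states A.
          gamma A (bot A) r s = bot A \<and> gamma A (top A) r s = bot A)"

inductive trace :: "('q, 'a) pa \<Rightarrow> 'q \<Rightarrow> 'a pomset \<Rightarrow> 'q \<Rightarrow> bool" for A where
  tr_one: "q \<in> states A \<Longrightarrow> trace A q pom_one q"
| tr_atom: "q \<in> states A \<Longrightarrow> trace A q (pom_atom a) (delta A q a)"
| tr_seq: "trace A q U q'' \<Longrightarrow> trace A q'' V q' \<Longrightarrow> trace A q (pom_seq U V) q'"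
| tr_par: "q \<in> states A \<Longrightarrow> trace A r U r' \<Longrightarrow> r' \<in> final A \<Longrightarrow>
           trace A s V s' \<Longrightarrow> s' \<in> final A \<Longrightarrow> trace A q (pom_par U V) (gamma A q r s)"

definition lang :: "('q, 'a) pa \<Rightarrow> 'q \<Rightarrow> 'a pomset set" where
  "lang A q = {U. \<exists>q'\<in>final A. trace A q U q'}"

inductive pa_le :: "('q, 'a) pa \<Rightarrow> 'q \<Rightarrow> 'q \<Rightarrow> bool" for A where
  le_refl: "q \<in> states A \<Longrightarrow> pa_le A q q"
| le_trans: "pa_le A p q \<Longrightarrow> pa_le A q r \<Longrightarrow> pa_le A p r"
| le_gamma_l: "q \<in> states A \<Longrightarrow> r \<in> states A \<Longrightarrow> s \<in> states A \<Longrightarrow>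
               gamma A q r s \<noteq> bot A \<Longrightarrow> pa_le A r q"
| le_gamma_r: "q \<in> states A \<Longrightarrow> r \<in> states A \<Longrightarrow> s \<in> states A \<Longrightarrow>
               gamma A q r s \<noteq> bot A \<Longrightarrow> pa_le A s q"
| le_delta: "q \<in> states A \<Longrightarrow> pa_le A (delta A q a) q"
| le_gamma: "q \<in> states A \<Longrightarrow> r \<in> states A \<Longrightarrow> s \<in> states A \<Longrightarrow>
             pa_le A (gamma A q r s) q"

definition pa_lt :: "('q, 'a) pa \<Rightarrow> 'q \<Rightarrow> 'q \<Rightarrow> bool" where
  "pa_lt A q q' \<longleftrightarrow> pa_le A q q' \<and> \<not> pa_le A q' q"

definition support :: "('q, 'a) pa \<Rightarrow> 'q \<Rightarrow> 'q set" where
  "support A q = \<Inter>{S. S \<subseteq> states A \<and> q \<in> S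
                        \<and> (\<forall>p\<in>S. \<forall>p'\<in>states A. pa_le A p' p \<longrightarrow> p' \<in> S)}"

definition finitely_supported :: "('q, 'a) pa \<Rightarrow> bool" where
  "finitely_supported A \<longleftrightarrow> (\<forall>q\<in>states A. finite (support A q))"

definition sequential_state :: "('q, 'a) pa \<Rightarrow> 'q \<Rightarrow> bool" where
  "sequential_state A q \<longleftrightarrow> (\<forall>r\<in>states A. \<forall>s\<in>states A.
     gamma A q r s \<noteq> bot A \<longrightarrow> pa_lt A r q \<and> pa_lt A s q)"

definition recursive_state :: "('q, 'a) pa \<Rightarrow> 'q \<Rightarrow> bool" where
  "recursive_state A q \<longleftrightarrow> q \<in> final A \<and> \<not> sequential_state A q
     \<and> (\<forall>a. delta A q a = bot A)
     \<and> (\<forall>r\<in>states A. \<forall>s\<in>states A. gamma A q r s \<noteq> bot A \<longrightarrow>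
          s = q \<and> pa_lt A r q \<and> gamma A q r s = top A)"

definition well_nested :: "('q, 'a) pa \<Rightarrow> bool" where
  "well_nested A \<longleftrightarrow> (\<forall>q\<in>states A. sequential_state A q \<or> recursive_state A q)"

end

theory Submission
  imports Defs "HOL-Library.Countable"
begin

text \<open>
  The automaton has a state for every subexpression of \<open>e\<close>, plus \<open>\<bottom>\<close> and \<open>\<top>\<close>, which are
  the numbers \<open>0\<close> and \<open>1\<close> (a subexpression \<open>g\<close> is the state \<open>spr_code g \<ge> 2\<close>).
  Every operator is implemented by a fork. The state of \<open>g + h\<close> forks into \<open>g\<close> (or \<open>h\<close>)
  alongside \<open>\<top>\<close> and joins in \<open>\<top>\<close>; \<open>g \<cdot> h\<close> forks into \<open>g\<close> alongside \<open>\<top>\<close> and continues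
  in \<open>h\<close>; \<open>g \<parallel> h\<close> forks into \<open>g\<close> and \<open>h\<close>; \<open>g\<^sup>*\<close> forks into \<open>g\<close> alongside \<open>\<top>\<close> and returns
  to itself. Forking alongside \<open>\<top>\<close> costs nothing, because \<open>U \<parallel> 1 = U\<close>. Finally \<open>g\<^sup>\<dagger>\<close> forks into
  \<open>g\<close> and into itself and joins in \<open>\<top>\<close>. This is the only recursive state; every other fork
  descends to proper subexpressions, which makes the automaton well-nested, and it has finitely
  many states. Correctness is proved by induction on traces in one direction (a trace from \<open>q\<close>
  to \<open>q'\<close> followed by a pomset of \<open>q'\<close> gives a pomset of \<open>q\<close>) and on expressions in the other.
\<close>

section \<open>Isomorphism and composition of labelled posets\<close>

lemma lp_simps [simp]:
  "lp_carrier (C, R, l) = C" "lp_order (C, R, l) = R" "lp_label (C, R, l) = l"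
  by (simp_all add: lp_carrier_def lp_order_def lp_label_def)

definition lp_iso_pair :: "(nat \<Rightarrow> nat) \<Rightarrow> (nat \<Rightarrow> nat) \<Rightarrow> 'a lposet \<Rightarrow> 'a lposet \<Rightarrow> bool" where
  "lp_iso_pair f g X Y \<longleftrightarrow>
     (\<forall>x\<in>lp_carrier X. f x \<in> lp_carrier Y \<and> g (f x) = x \<and> lp_label Y (f x) = lp_label X x)
     \<and> (\<forall>y\<in>lp_carrier Y. g y \<in> lp_carrier X \<and> f (g y) = y)
     \<and> (\<forall>x\<in>lp_carrier X. \<forall>y\<in>lp_carrier X. (x, y) \<in> lp_order X \<longleftrightarrow> (f x, f y) \<in> lp_order Y)"

lemma lp_iso_iff_pair: "lp_iso X Y \<longleftrightarrow> (\<exists>f g. lp_iso_pair f g X Y)"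
proof
  assume "lp_iso X Y"
  then obtain f where f: "bij_betw f (lp_carrier X) (lp_carrier Y)"
    and "\<forall>x\<in>lp_carrier X. \<forall>y\<in>lp_carrier X. (x, y) \<in> lp_order X \<longleftrightarrow> (f x, f y) \<in> lp_order Y"
    and "\<forall>x\<in>lp_carrier X. lp_label Y (f x) = lp_label X x"
    unfolding lp_iso_def by blast
  moreover note bij_betw_inv_into[OF f]
  ultimately have "lp_iso_pair f (inv_into (lp_carrier X) f) X Y"
    unfolding lp_iso_pair_def
    by (simp add: bij_betw_apply bij_betw_inv_into_left bij_betw_inv_into_right)
  then show "\<exists>f g. lp_iso_pair f g X Y" by blast
next
  assume "\<exists>f g. lp_iso_pair f g X Y"
  then obtain f g where fg: "lp_iso_pair f g X Y" by blast
  then have "bij_betw f (lp_carrier X) (lp_carrier Y)"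
    unfolding lp_iso_pair_def by (intro bij_betw_byWitness[where f' = g]) auto
  with fg show "lp_iso X Y" unfolding lp_iso_def lp_iso_pair_def by blast
qed

lemma lp_iso_pairI: "lp_iso_pair f g X Y \<Longrightarrow> lp_iso X Y"
  by (auto simp: lp_iso_iff_pair)

lemma lp_iso_refl: "lp_iso X X"
  by (rule lp_iso_pairI[of id id]) (simp add: lp_iso_pair_def)

lemma lp_iso_pair_sym: "lp_iso_pair f g X Y \<Longrightarrow> lp_iso_pair g f Y X"
  unfolding lp_iso_pair_def by (smt (verit))

lemma lp_iso_sym: "lp_iso X Y \<Longrightarrow> lp_iso Y X"
  by (meson lp_iso_iff_pair lp_iso_pair_sym)

lemma lp_iso_trans: "lp_iso X Y \<Longrightarrow> lp_iso Y Z \<Longrightarrow> lp_iso X Z"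
proof (unfold lp_iso_iff_pair, elim exE)
  fix f g f' g' assume "lp_iso_pair f g X Y" "lp_iso_pair f' g' Y Z"
  then have "lp_iso_pair (f' \<circ> f) (g \<circ> g') X Z" by (simp add: lp_iso_pair_def)
  then show "\<exists>f g. lp_iso_pair f g X Z" by blast
qed

definition left_copy :: "nat \<Rightarrow> nat" where
  "left_copy n = 2 * n"

definition right_copy :: "nat \<Rightarrow> nat" where
  "right_copy n = 2 * n + 1"

lemma copy_eq_iff [simp]:
  "left_copy m = left_copy n \<longleftrightarrow> m = n" "right_copy m = right_copy n \<longleftrightarrow> m = n"
  "left_copy m \<noteq> right_copy n" "right_copy m \<noteq> left_copy n"
  by (simp_all add: left_copy_def right_copy_def) presburger+

lemma copy_div_2 [simp]: "left_copy a div 2 = a" "right_copy b div 2 = b"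
  by (simp_all add: left_copy_def right_copy_def)

lemma lp_seq_copy [simp]:
  "left_copy a \<in> lp_carrier (lp_seq X Y) \<longleftrightarrow> a \<in> lp_carrier X"
  "right_copy b \<in> lp_carrier (lp_seq X Y) \<longleftrightarrow> b \<in> lp_carrier Y"
  "(left_copy a, left_copy a') \<in> lp_order (lp_seq X Y) \<longleftrightarrow> (a, a') \<in> lp_order X"
  "(right_copy b, right_copy b') \<in> lp_order (lp_seq X Y) \<longleftrightarrow> (b, b') \<in> lp_order Y"
  "(left_copy a, right_copy b) \<in> lp_order (lp_seq X Y) \<longleftrightarrow> a \<in> lp_carrier X \<and> b \<in> lp_carrier Y"
  "(right_copy b, left_copy a) \<notin> lp_order (lp_seq X Y)"
  "lp_label (lp_seq X Y) (left_copy a) = lp_label X a"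
  "lp_label (lp_seq X Y) (right_copy b) = lp_label Y b"
  by (auto simp: lp_seq_def lp_par_def left_copy_def right_copy_def) presburger+

lemma lp_par_copy [simp]:
  "left_copy a \<in> lp_carrier (lp_par X Y) \<longleftrightarrow> a \<in> lp_carrier X"
  "right_copy b \<in> lp_carrier (lp_par X Y) \<longleftrightarrow> b \<in> lp_carrier Y"
  "(left_copy a, left_copy a') \<in> lp_order (lp_par X Y) \<longleftrightarrow> (a, a') \<in> lp_order X"
  "(right_copy b, right_copy b') \<in> lp_order (lp_par X Y) \<longleftrightarrow> (b, b') \<in> lp_order Y"
  "(left_copy a, right_copy b) \<notin> lp_order (lp_par X Y)"
  "(right_copy b, left_copy a) \<notin> lp_order (lp_par X Y)"
  "lp_label (lp_par X Y) (left_copy a) = lp_label X a"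
  "lp_label (lp_par X Y) (right_copy b) = lp_label Y b"
  by (auto simp: lp_par_def left_copy_def right_copy_def) presburger+

lemma lp_seq_carrier_eq:
  "lp_carrier (lp_seq X Y) = left_copy ` lp_carrier X \<union> right_copy ` lp_carrier Y"
  by (auto simp: lp_seq_def lp_par_def left_copy_def right_copy_def)

lemma lp_seq_carrierE:
  assumes "x \<in> lp_carrier (lp_seq X Y)"
  obtains a where "x = left_copy a" "a \<in> lp_carrier X" | b where "x = right_copy b" "b \<in> lp_carrier Y"
  using assms by (auto simp: lp_seq_carrier_eq)

lemma lp_carrier_par_eq_seq: "lp_carrier (lp_par X Y) = lp_carrier (lp_seq X Y)"
  by (simp add: lp_seq_def)

lemma lp_seq_orderE:
  assumes "(p, q) \<in> lp_order (lp_seq X Y)"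
  obtains a a' where "p = left_copy a" "q = left_copy a'" "(a, a') \<in> lp_order X"
  | b b' where "p = right_copy b" "q = right_copy b'" "(b, b') \<in> lp_order Y"
  | a b where "p = left_copy a" "q = right_copy b" "a \<in> lp_carrier X" "b \<in> lp_carrier Y"
  using assms by (auto simp: lp_seq_def lp_par_def left_copy_def right_copy_def)

lemma wf_lp_seq:
  assumes X: "wf_lp X" and Y: "wf_lp Y"
  shows "wf_lp (lp_seq X Y)"
  unfolding wf_lp_def
proof (intro conjI allI impI ballI subsetI)
  show "finite (lp_carrier (lp_seq X Y))"
    using X Y by (simp add: wf_lp_def lp_seq_carrier_eq)
next
  fix x assume "x \<in> lp_carrier (lp_seq X Y)"
  then show "(x, x) \<in> lp_order (lp_seq X Y)"
    using X Y by (auto simp: lp_seq_carrier_eq wf_lp_def)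
next
  fix pq assume "pq \<in> lp_order (lp_seq X Y)"
  then show "pq \<in> lp_carrier (lp_seq X Y) \<times> lp_carrier (lp_seq X Y)"
    using X Y by (cases pq) (auto elim!: lp_seq_orderE simp: wf_lp_def)
next
  fix x y assume "(x, y) \<in> lp_order (lp_seq X Y) \<and> (y, x) \<in> lp_order (lp_seq X Y)"
  then show "x = y"
    using X Y by (auto elim!: lp_seq_orderE simp: wf_lp_def)
next
  show "trans (lp_order (lp_seq X Y))"
  proof (rule transI)
    fix x y z assume "(x, y) \<in> lp_order (lp_seq X Y)" "(y, z) \<in> lp_order (lp_seq X Y)"
    then show "(x, z) \<in> lp_order (lp_seq X Y)"
      using X Y by (elim lp_seq_orderE) (auto simp: wf_lp_def dest: transD)
  qed
qed

definition copy_map :: "(nat \<Rightarrow> nat) \<Rightarrow> (nat \<Rightarrow> nat) \<Rightarrow> nat \<Rightarrow> nat" where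
  "copy_map f h n = (if even n then left_copy (f (n div 2)) else right_copy (h (n div 2)))"

lemma copy_map_copy [simp]:
  "copy_map f h (left_copy a) = left_copy (f a)" "copy_map f h (right_copy b) = right_copy (h b)"
  by (simp_all add: copy_map_def left_copy_def right_copy_def)

lemma lp_iso_pair_seq_par:
  assumes "lp_iso_pair f g X X'" "lp_iso_pair h k Y Y'"
  shows "lp_iso_pair (copy_map f h) (copy_map g k) (lp_seq X Y) (lp_seq X' Y')"
    and "lp_iso_pair (copy_map f h) (copy_map g k) (lp_par X Y) (lp_par X' Y')"
  using assms unfolding lp_iso_pair_def lp_carrier_par_eq_seq
  by (auto elim!: lp_seq_carrierE)

lemma lp_iso_seq_cong: "lp_iso X X' \<Longrightarrow> lp_iso Y Y' \<Longrightarrow> lp_iso (lp_seq X Y) (lp_seq X' Y')"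
  by (meson lp_iso_iff_pair lp_iso_pair_seq_par(1))

lemma lp_iso_par_cong: "lp_iso X X' \<Longrightarrow> lp_iso Y Y' \<Longrightarrow> lp_iso (lp_par X Y) (lp_par X' Y')"
  by (meson lp_iso_iff_pair lp_iso_pair_seq_par(2))

lemma lp_iso_seq_empty_left: "lp_iso (lp_seq lp_empty X) X"
  by (rule lp_iso_pairI[of "\<lambda>n. n div 2" right_copy])
    (auto simp: lp_iso_pair_def lp_empty_def elim!: lp_seq_carrierE)

lemma lp_iso_seq_empty_right: "lp_iso (lp_seq X lp_empty) X"
  by (rule lp_iso_pairI[of "\<lambda>n. n div 2" left_copy])
    (auto simp: lp_iso_pair_def lp_empty_def elim!: lp_seq_carrierE)

lemma lp_iso_par_empty_right: "lp_iso (lp_par X lp_empty) X"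
  by (rule lp_iso_pairI[of "\<lambda>n. n div 2" left_copy])
    (auto simp: lp_iso_pair_def lp_empty_def lp_carrier_par_eq_seq elim!: lp_seq_carrierE)

text \<open>In \<open>lp_seq (lp_seq X Y) Z\<close> the points of \<open>X\<close>, \<open>Y\<close>, \<open>Z\<close> are \<open>4a\<close>, \<open>4b + 2\<close>,
  \<open>2c + 1\<close>; in \<open>lp_seq X (lp_seq Y Z)\<close> they are \<open>2a\<close>, \<open>4b + 1\<close>, \<open>4c + 3\<close>.\<close>

definition seq_assoc_map :: "nat \<Rightarrow> nat" where
  "seq_assoc_map n = (if odd n then right_copy n else if 4 dvd n then n div 2 else n - 1)"

definition seq_assoc_inv :: "nat \<Rightarrow> nat" where
  "seq_assoc_inv n = (if even n then left_copy n else if n mod 4 = 1 then n + 1 else n div 2)"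

lemma seq_assoc_map_copy [simp]:
  "seq_assoc_map (left_copy (left_copy a)) = left_copy a"
  "seq_assoc_map (left_copy (right_copy b)) = right_copy (left_copy b)"
  "seq_assoc_map (right_copy c) = right_copy (right_copy c)"
  "seq_assoc_inv (left_copy a) = left_copy (left_copy a)"
  "seq_assoc_inv (right_copy (left_copy b)) = left_copy (right_copy b)"
  "seq_assoc_inv (right_copy (right_copy c)) = right_copy c"
  unfolding seq_assoc_map_def seq_assoc_inv_def left_copy_def right_copy_def by presburger+

lemma lp_iso_seq_assoc: "lp_iso (lp_seq (lp_seq X Y) Z) (lp_seq X (lp_seq Y Z))"
  by (rule lp_iso_pairI[of seq_assoc_map seq_assoc_inv])
    (auto simp: lp_iso_pair_def elim!: lp_seq_carrierE)

section \<open>Pomsets and pomset languages\<close>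

lemma wf_lp_empty: "wf_lp lp_empty"
  by (simp add: wf_lp_def lp_empty_def)

lemma Rep_pomset_pom: "wf_lp X \<Longrightarrow> Rep_pomset (pom X) = {Y. wf_lp Y \<and> lp_iso X Y}"
  unfolding pom_def by (rule Abs_pomset_inverse) blast

lemma pom_eqI: "lp_iso X Y \<Longrightarrow> pom X = pom Y"
  unfolding pom_def by (metis lp_iso_sym lp_iso_trans)

lemma lp_iso_pom_rep_pom: "wf_lp X \<Longrightarrow> lp_iso (pom_rep (pom X)) X"
  unfolding pom_rep_def
  by (rule someI2[of _ X]) (auto simp: Rep_pomset_pom lp_iso_refl intro: lp_iso_sym)

lemma pom_seq_pom: "wf_lp X \<Longrightarrow> wf_lp Y \<Longrightarrow> pom_seq (pom X) (pom Y) = pom (lp_seq X Y)"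
  unfolding pom_seq_def by (intro pom_eqI lp_iso_seq_cong lp_iso_pom_rep_pom)

lemma pom_par_pom: "wf_lp X \<Longrightarrow> wf_lp Y \<Longrightarrow> pom_par (pom X) (pom Y) = pom (lp_par X Y)"
  unfolding pom_par_def by (intro pom_eqI lp_iso_par_cong lp_iso_pom_rep_pom)

lemma pom_cases:
  obtains X where "wf_lp X" "U = pom X"
  using Rep_pomset[of U] Rep_pomset_inverse[of U] unfolding pom_def by auto

lemma pom_seq_one_left: "pom_seq pom_one U = U"
  by (cases U rule: pom_cases)
    (simp add: pom_one_def wf_lp_empty pom_seq_pom pom_eqI[OF lp_iso_seq_empty_left])

lemma pom_seq_one_right: "pom_seq U pom_one = U"
  by (cases U rule: pom_cases)
    (simp add: pom_one_def wf_lp_empty pom_seq_pom pom_eqI[OF lp_iso_seq_empty_right])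

lemma pom_par_one_right: "pom_par U pom_one = U"
  by (cases U rule: pom_cases)
    (simp add: pom_one_def wf_lp_empty pom_par_pom pom_eqI[OF lp_iso_par_empty_right])

lemma pom_seq_assoc: "pom_seq (pom_seq U V) W = pom_seq U (pom_seq V W)"
  by (cases U rule: pom_cases, cases V rule: pom_cases, cases W rule: pom_cases)
    (simp add: pom_seq_pom wf_lp_seq pom_eqI[OF lp_iso_seq_assoc])

lemma pom_one_in_lang_star: "pom_one \<in> lang_star L"
  unfolding lang_star_def by (auto intro: exI[of _ 0])

lemma pom_seq_in_lang_star:
  assumes "U \<in> L" "W \<in> lang_star L"
  shows "pom_seq U W \<in> lang_star L"
proof -
  obtain n where "W \<in> lang_seq_pow L n" using assms(2) unfolding lang_star_def by blast
  then have "pom_seq U W \<in> lang_seq_pow L (Suc n)" using assms(1) by (auto simp: lang_seq_def)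
  then show ?thesis unfolding lang_star_def by blast
qed

lemma pom_one_in_lang_dagger: "pom_one \<in> lang_dagger L"
  unfolding lang_dagger_def by (auto intro: exI[of _ 0])

lemma pom_par_in_lang_dagger:
  assumes "U \<in> L" "W \<in> lang_dagger L"
  shows "pom_par U W \<in> lang_dagger L"
proof -
  obtain n where "W \<in> lang_par_pow L n" using assms(2) unfolding lang_dagger_def by blast
  then have "pom_par U W \<in> lang_par_pow L (Suc n)" using assms(1) by (auto simp: lang_par_def)
  then show ?thesis unfolding lang_dagger_def by blast
qed

lemma support_subset_states: "q \<in> states A \<Longrightarrow> support A q \<subseteq> states A"
  unfolding support_def by (rule Inter_lower) blast

lemma finitely_supported_if_finite_states: "finite (states A) \<Longrightarrow> finitely_supported A"
  unfolding finitely_supported_def by (metis finite_subset support_subset_states)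

lemma pom_one_in_lang: "is_pa A \<Longrightarrow> q \<in> final A \<Longrightarrow> pom_one \<in> lang A q"
  unfolding lang_def is_pa_def by (blast intro: tr_one)

lemma trace_gamma_top:
  assumes A: "is_pa A" and q: "q \<in> states A" and U: "U \<in> lang A r"
  shows "trace A q U (gamma A q r (top A))"
proof -
  obtain r' where "trace A r U r'" "r' \<in> final A" using U unfolding lang_def by blast
  moreover have "trace A (top A) pom_one (top A)" "top A \<in> final A"
    using A by (simp_all add: is_pa_def tr_one)
  ultimately have "trace A q (pom_par U pom_one) (gamma A q r (top A))"
    using q by (blast intro: tr_par)
  then show ?thesis by (simp add: pom_par_one_right)
qed

lemma pom_seq_in_lang_gamma_top:
  "is_pa A \<Longrightarrow> q \<in> states A \<Longrightarrow> U \<in> lang A r \<Longrightarrow> V \<in> lang A (gamma A q r (top A))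
    \<Longrightarrow> pom_seq U V \<in> lang A q"
  unfolding lang_def by (blast intro: tr_seq trace_gamma_top[unfolded lang_def])

lemma pom_par_in_lang_gamma:
  "q \<in> states A \<Longrightarrow> U \<in> lang A r \<Longrightarrow> V \<in> lang A s \<Longrightarrow> gamma A q r s \<in> final A
    \<Longrightarrow> pom_par U V \<in> lang A q"
  unfolding lang_def by (blast intro: tr_par)

lemma lang_subset_gamma_top:
  assumes "is_pa A" "q \<in> states A" "gamma A q r (top A) \<in> final A"
  shows "lang A r \<subseteq> lang A q"
  using pom_seq_in_lang_gamma_top[OF assms(1,2) _ pom_one_in_lang[OF assms(1,3)]]
  by (simp add: pom_seq_one_right subsetI)

lemma lang_seq_subset_gamma_top:
  assumes "is_pa A" "q \<in> states A" "L \<subseteq> lang A r" "M \<subseteq> lang A (gamma A q r (top A))"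
  shows "lang_seq L M \<subseteq> lang A q"
  using assms pom_seq_in_lang_gamma_top[OF assms(1,2)] unfolding lang_seq_def by blast

lemma lang_par_subset_gamma:
  assumes "q \<in> states A" "gamma A q r s \<in> final A" "L \<subseteq> lang A r" "M \<subseteq> lang A s"
  shows "lang_par L M \<subseteq> lang A q"
  using assms pom_par_in_lang_gamma[OF assms(1)] unfolding lang_par_def by blast

lemma lang_star_subset:
  assumes A: "is_pa A" and q: "q \<in> final A" and loop: "gamma A q r (top A) = q"
    and L: "L \<subseteq> lang A r"
  shows "lang_star L \<subseteq> lang A q"
proof -
  have "q \<in> states A" using A q by (auto simp: is_pa_def)
  have "lang_seq_pow L n \<subseteq> lang A q" for n
  proof (induction n)
    case 0
    then show ?case using A q by (simp add: pom_one_in_lang)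
  next
    case (Suc n)
    then show ?case
      using pom_seq_in_lang_gamma_top[OF A \<open>q \<in> states A\<close>, of _ r] L loop
      by (fastforce simp: lang_seq_def)
  qed
  then show ?thesis unfolding lang_star_def by blast
qed

lemma lang_dagger_subset:
  assumes A: "is_pa A" and q: "q \<in> final A" and loop: "gamma A q r q \<in> final A"
    and L: "L \<subseteq> lang A r"
  shows "lang_dagger L \<subseteq> lang A q"
proof -
  have "q \<in> states A" using A q by (auto simp: is_pa_def)
  have "lang_par_pow L n \<subseteq> lang A q" for n
  proof (induction n)
    case 0
    then show ?case using A q by (simp add: pom_one_in_lang)
  next
    case (Suc n)
    then show ?case
      using pom_par_in_lang_gamma[OF \<open>q \<in> states A\<close>, of _ r _ q] L loop
      by (fastforce simp: lang_par_def)
  qed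
  then show ?thesis unfolding lang_dagger_def by blast
qed

section \<open>The automaton of an expression\<close>

primrec subexprs :: "'a spr \<Rightarrow> 'a spr set" where
  "subexprs Zero = {Zero}"
| "subexprs One = {One}"
| "subexprs (Atom a) = {Atom a}"
| "subexprs (Plus e f) = insert (Plus e f) (subexprs e \<union> subexprs f)"
| "subexprs (Seq e f) = insert (Seq e f) (subexprs e \<union> subexprs f)"
| "subexprs (Par e f) = insert (Par e f) (subexprs e \<union> subexprs f)"
| "subexprs (Star e) = insert (Star e) (subexprs e)"
| "subexprs (Dagger e) = insert (Dagger e) (subexprs e)"

lemma finite_subexprs: "finite (subexprs e)"
  by (induction e) auto

lemma subexprs_refl: "e \<in> subexprs e"
  by (cases e) auto

lemma subexprs_trans: "e \<in> subexprs f \<Longrightarrow> f \<in> subexprs g \<Longrightarrow> e \<in> subexprs g"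
  by (induction g) auto

lemma size_subexprs: "e \<in> subexprs f \<Longrightarrow> e = f \<or> size e < size f"
  by (induction f) auto

lemma subexprs_child:
  "Plus e f \<in> subexprs g \<Longrightarrow> e \<in> subexprs g \<and> f \<in> subexprs g"
  "Seq e f \<in> subexprs g \<Longrightarrow> e \<in> subexprs g \<and> f \<in> subexprs g"
  "Par e f \<in> subexprs g \<Longrightarrow> e \<in> subexprs g \<and> f \<in> subexprs g"
  "Star e \<in> subexprs g \<Longrightarrow> e \<in> subexprs g"
  "Dagger e \<in> subexprs g \<Longrightarrow> e \<in> subexprs g"
  by (induction g) (auto simp: subexprs_refl)

lemma subexprs_antisym: "e \<in> subexprs f \<Longrightarrow> f \<in> subexprs e \<Longrightarrow> e = f"
  using size_subexprs[of e f] size_subexprs[of f e] by auto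

instance spr :: (countable) countable
  by countable_datatype

definition spr_code :: "'a::countable spr \<Rightarrow> nat" where
  "spr_code e = to_nat e + 2"

definition spr_decode :: "nat \<Rightarrow> 'a::countable spr" where
  "spr_decode n = from_nat (n - 2)"

lemma spr_code_simps [simp]:
  "spr_decode (spr_code e) = e" "spr_code e = spr_code f \<longleftrightarrow> e = f"
  "spr_code e \<noteq> 0" "spr_code e \<noteq> Suc 0" "\<not> spr_code e < 2"
  by (auto simp: spr_code_def spr_decode_def)

fun spr_delta :: "'a::countable spr \<Rightarrow> 'a \<Rightarrow> nat" where
  "spr_delta (Atom b) a = (if a = b then 1 else 0)"
| "spr_delta _ a = 0"

fun spr_gamma :: "'a::countable spr \<Rightarrow> nat \<Rightarrow> nat \<Rightarrow> nat" where
  "spr_gamma (Plus e f) r s = (if (r = spr_code e \<or> r = spr_code f) \<and> s = 1 then 1 else 0)"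
| "spr_gamma (Seq e f) r s = (if r = spr_code e \<and> s = 1 then spr_code f else 0)"
| "spr_gamma (Par e f) r s = (if r = spr_code e \<and> s = spr_code f then 1 else 0)"
| "spr_gamma (Star e) r s = (if r = spr_code e \<and> s = 1 then spr_code (Star e) else 0)"
| "spr_gamma (Dagger e) r s = (if r = spr_code e \<and> s = spr_code (Dagger e) then 1 else 0)"
| "spr_gamma _ r s = 0"

fun accepting :: "'a spr \<Rightarrow> bool" where
  "accepting One = True"
| "accepting (Star e) = True"
| "accepting (Dagger e) = True"
| "accepting _ = False"

definition spr_pa :: "'a::countable spr \<Rightarrow> (nat, 'a) pa" where
  "spr_pa e0 =
    \<lparr>states = {0, 1} \<union> spr_code ` subexprs e0,
     delta = \<lambda>q a. if q < 2 then 0 else spr_delta (spr_decode q :: 'a spr) a,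
     gamma = \<lambda>q r s. if q < 2 then 0 else spr_gamma (spr_decode q :: 'a spr) r s,
     final = insert 1 (spr_code ` {e \<in> subexprs e0. accepting e}),
     bot = 0, top = 1\<rparr>"

lemma spr_pa_simps [simp]:
  "states (spr_pa e0) = {0, 1} \<union> spr_code ` subexprs e0"
  "final (spr_pa e0) = insert 1 (spr_code ` {e \<in> subexprs e0. accepting e})"
  "bot (spr_pa e0) = 0" "top (spr_pa e0) = 1"
  "delta (spr_pa e0) (spr_code e) a = spr_delta e a"
  "gamma (spr_pa e0) (spr_code e) r s = spr_gamma e r s"
  "delta (spr_pa e0) 0 a = 0" "delta (spr_pa e0) (Suc 0) a = 0"
  "gamma (spr_pa e0) 0 r s = 0" "gamma (spr_pa e0) (Suc 0) r s = 0"
  for e0 e :: "'a::countable spr"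
  by (simp_all add: spr_pa_def)

lemma spr_pa_statesE:
  assumes "q \<in> states (spr_pa e0)"
  obtains "q = 0" | "q = 1" | e where "e \<in> subexprs e0" "q = spr_code e"
  using assms by auto

lemma delta_spr_pa_range: "delta (spr_pa e0) q a \<in> {0, 1}"
proof -
  have "spr_delta e a \<in> {0, 1}" for e :: "'a spr" by (cases e) auto
  then show ?thesis by (simp add: spr_pa_def)
qed

lemma spr_gamma_range: "spr_gamma f r s \<in> {0, 1} \<union> spr_code ` subexprs f"
  by (cases f) (auto simp: subexprs_refl)

lemma spr_gamma_nonzero:
  assumes "spr_gamma f r s \<noteq> 0"
  shows "r \<in> spr_code ` (subexprs f - {f})"
    and "s \<in> insert 1 (spr_code ` subexprs f)"
    and "(\<forall>g. f \<noteq> Dagger g) \<Longrightarrow> s \<in> insert 1 (spr_code ` (subexprs f - {f}))"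
  using assms by (cases f; auto simp: subexprs_refl split: if_splits)+

lemma is_pa_spr_pa: "is_pa (spr_pa e0)"
proof -
  have "gamma (spr_pa e0) q r s \<in> states (spr_pa e0)" if "q \<in> states (spr_pa e0)" for q r s
    using that
  proof (cases rule: spr_pa_statesE)
    case (3 e)
    then show ?thesis using spr_gamma_range[of e r s] by (auto intro: subexprs_trans)
  qed simp_all
  moreover have "delta (spr_pa e0) q a \<in> states (spr_pa e0)" for q a
    using delta_spr_pa_range[of e0 q a] by auto
  ultimately show ?thesis
    unfolding is_pa_def by auto
qed

lemma pa_le_spr_pa_subexprs:
  fixes e0 :: "'a::countable spr"
  assumes "pa_le (spr_pa e0) p q"
  shows "p \<in> {0, 1} \<or> (\<exists>e f :: 'a spr. p = spr_code e \<and> q = spr_code f \<and> e \<in> subexprs f)"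
  using assms
proof (induction rule: pa_le.induct)
  case (le_refl q)
  then show ?case by (auto simp: subexprs_refl)
next
  case (le_trans p q r)
  then show ?case by (auto intro: subexprs_trans)
next
  case (le_gamma_l q r s)
  from le_gamma_l.hyps(1) show ?case
  proof (cases rule: spr_pa_statesE)
    case (3 f)
    then have "spr_gamma f r s \<noteq> 0" using le_gamma_l.hyps(4) by simp
    then show ?thesis using 3 spr_gamma_nonzero(1) by blast
  qed (use le_gamma_l.hyps(4) in simp_all)
next
  case (le_gamma_r q r s)
  from le_gamma_r.hyps(1) show ?case
  proof (cases rule: spr_pa_statesE)
    case (3 f)
    then have "spr_gamma f r s \<noteq> 0" using le_gamma_r.hyps(4) by simp
    then show ?thesis using 3 spr_gamma_nonzero(2) by blast
  qed (use le_gamma_r.hyps(4) in simp_all)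
next
  case (le_delta q a)
  then show ?case using delta_spr_pa_range by blast
next
  case (le_gamma q r s)
  from le_gamma.hyps(1) show ?case
  proof (cases rule: spr_pa_statesE)
    case (3 f)
    then show ?thesis using spr_gamma_range[of f r s] by auto
  qed simp_all
qed

lemma pa_lt_spr_pa:
  fixes e0 f :: "'a::countable spr"
  assumes le: "pa_le (spr_pa e0) r (spr_code f)"
    and r: "r \<in> insert 1 (spr_code ` (subexprs f - {f}))"
  shows "pa_lt (spr_pa e0) r (spr_code f)"
proof -
  have "\<not> pa_le (spr_pa e0) (spr_code f) r"
  proof
    assume "pa_le (spr_pa e0) (spr_code f) r"
    then obtain e :: "'a spr" where "r = spr_code e" "f \<in> subexprs e"
      using pa_le_spr_pa_subexprs by fastforce
    then show False using r subexprs_antisym by auto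
  qed
  with le show ?thesis by (simp add: pa_lt_def)
qed

lemma sequential_state_spr_pa:
  fixes e0 :: "'a::countable spr"
  assumes q: "q \<in> states (spr_pa e0)"
    and not_dagger: "\<forall>g :: 'a spr. q \<noteq> spr_code (Dagger g)"
  shows "sequential_state (spr_pa e0) q"
  unfolding sequential_state_def
proof (intro ballI impI)
  fix r s
  assume r: "r \<in> states (spr_pa e0)" and s: "s \<in> states (spr_pa e0)"
    and nz: "gamma (spr_pa e0) q r s \<noteq> bot (spr_pa e0)"
  from q obtain f where f: "f \<in> subexprs e0" "q = spr_code f"
    using nz by (cases rule: spr_pa_statesE) auto
  with nz not_dagger have "spr_gamma f r s \<noteq> 0" "\<forall>g. f \<noteq> Dagger g" by auto
  then have "r \<in> insert 1 (spr_code ` (subexprs f - {f}))"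
    and "s \<in> insert 1 (spr_code ` (subexprs f - {f}))"
    using spr_gamma_nonzero by blast+
  moreover have "pa_le (spr_pa e0) r q" "pa_le (spr_pa e0) s q"
    using q r s nz by (blast intro: le_gamma_l le_gamma_r)+
  ultimately show "pa_lt (spr_pa e0) r q \<and> pa_lt (spr_pa e0) s q"
    using f pa_lt_spr_pa by blast
qed

lemma recursive_state_spr_pa:
  assumes "Dagger g \<in> subexprs e0"
  shows "recursive_state (spr_pa e0) (spr_code (Dagger g))"
proof -
  let ?A = "spr_pa e0" and ?q = "spr_code (Dagger g)"
  have g: "g \<in> subexprs (Dagger g) - {Dagger g}" by (simp add: subexprs_refl)
  from assms subexprs_child(5) have q: "?q \<in> states ?A" and r: "spr_code g \<in> states ?A"
    using assms by auto
  have "pa_le ?A (spr_code g) ?q"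
    using le_gamma_l[OF q r q] by simp
  then have lt: "pa_lt ?A (spr_code g) ?q"
    using g by (blast intro: pa_lt_spr_pa)
  have "\<not> sequential_state ?A ?q"
    unfolding sequential_state_def pa_lt_def using q r by auto
  with assms lt show ?thesis
    unfolding recursive_state_def by auto
qed

lemma well_nested_spr_pa: "well_nested (spr_pa e0)" for e0 :: "'a::countable spr"
  unfolding well_nested_def
proof
  fix q assume q: "q \<in> states (spr_pa e0)"
  show "sequential_state (spr_pa e0) q \<or> recursive_state (spr_pa e0) q"
  proof (cases "\<exists>g :: 'a spr. q = spr_code (Dagger g)")
    case True
    then obtain g :: "'a spr" where "q = spr_code (Dagger g)" by blast
    moreover from q this have "Dagger g \<in> subexprs e0" by auto
    ultimately show ?thesis using recursive_state_spr_pa by blast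
  qed (use q sequential_state_spr_pa in blast)
qed

section \<open>Correctness\<close>

definition state_sem :: "nat \<Rightarrow> 'a::countable pomset set" where
  "state_sem q = (if q = 0 then {} else if q = 1 then {pom_one} else sem (spr_decode q))"

lemma state_sem_simps [simp]:
  "state_sem 0 = {}" "state_sem (Suc 0) = {pom_one}" "state_sem (spr_code e) = sem e"
  by (simp_all add: state_sem_def)

lemma pom_one_in_state_sem:
  fixes e0 :: "'a::countable spr"
  assumes "q \<in> final (spr_pa e0)"
  shows "pom_one \<in> (state_sem q :: 'a pomset set)"
proof -
  have "accepting e \<Longrightarrow> pom_one \<in> sem e" for e :: "'a spr"
    by (cases e) (simp_all add: pom_one_in_lang_star pom_one_in_lang_dagger)
  with assms show ?thesis by auto
qed

lemma sem_spr_delta: "W \<in> state_sem (spr_delta f a) \<Longrightarrow> pom_seq (pom_atom a) W \<in> sem f"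
  by (cases f) (auto simp: pom_seq_one_right split: if_splits)

lemma sem_spr_gamma:
  "U \<in> state_sem r \<Longrightarrow> V \<in> state_sem s \<Longrightarrow> W \<in> state_sem (spr_gamma f r s)
    \<Longrightarrow> pom_seq (pom_par U V) W \<in> sem f"
  by (cases f)
    (auto simp: pom_seq_one_right pom_par_one_right lang_seq_def lang_par_def
      pom_seq_in_lang_star pom_par_in_lang_dagger split: if_splits)

text \<open>Generalised over the continuation \<open>W\<close> so that the case \<open>tr_seq\<close> composes.\<close>

lemma trace_spr_pa_sound:
  assumes "trace (spr_pa e0) q U q'" "W \<in> state_sem q'"
  shows "pom_seq U W \<in> state_sem q"
  using assms
proof (induction arbitrary: W rule: trace.induct)
  case (tr_one q)
  then show ?case by (simp add: pom_seq_one_left)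
next
  case (tr_atom q a)
  then show ?case
    by (cases "q < 2") (auto simp: spr_pa_def state_sem_def sem_spr_delta)
next
  case (tr_seq q U q'' V q')
  then show ?case by (simp add: pom_seq_assoc)
next
  case (tr_par q r U r' s V s')
  have "U \<in> state_sem r" "V \<in> state_sem s"
    using tr_par.IH pom_one_in_state_sem tr_par.hyps(3,5) by (metis pom_seq_one_right)+
  with tr_par.prems show ?case
    by (cases "q < 2") (auto simp: spr_pa_def state_sem_def sem_spr_gamma)
qed

lemma lang_spr_pa_subset_sem: "lang (spr_pa e0) (spr_code e) \<subseteq> sem e"
proof
  fix U assume "U \<in> lang (spr_pa e0) (spr_code e)"
  then obtain q' where "trace (spr_pa e0) (spr_code e) U q'" "q' \<in> final (spr_pa e0)"
    unfolding lang_def by blast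
  then have "pom_seq U pom_one \<in> state_sem (spr_code e)"
    by (blast intro: trace_spr_pa_sound pom_one_in_state_sem)
  then show "U \<in> sem e" by (simp add: pom_seq_one_right)
qed

lemma sem_subset_lang_spr_pa:
  fixes e0 e :: "'a::countable spr"
  assumes "e \<in> subexprs e0"
  shows "sem e \<subseteq> lang (spr_pa e0) (spr_code e)"
  using assms
proof (induction e)
  case One
  then show ?case by (auto intro!: pom_one_in_lang is_pa_spr_pa)
next
  case (Atom a)
  then have "trace (spr_pa e0) (spr_code (Atom a)) (pom_atom a) 1"
    using tr_atom[of "spr_code (Atom a)" "spr_pa e0" a] by simp
  then show ?case by (auto simp: lang_def)
next
  case (Plus e f)
  then have "sem e \<subseteq> lang (spr_pa e0) (spr_code e)" "sem f \<subseteq> lang (spr_pa e0) (spr_code f)"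
    using subexprs_child(1) by blast+
  moreover have "lang (spr_pa e0) (spr_code g) \<subseteq> lang (spr_pa e0) (spr_code (Plus e f))"
    if "g = e \<or> g = f" for g
    using Plus.prems that by (intro lang_subset_gamma_top[OF is_pa_spr_pa]) auto
  ultimately show ?case by auto
next
  case (Seq e f)
  then have "e \<in> subexprs e0" "f \<in> subexprs e0" using subexprs_child(2) by blast+
  with Seq.IH Seq.prems show ?case
    unfolding sem.simps
    by (intro lang_seq_subset_gamma_top[OF is_pa_spr_pa, where r = "spr_code e"]) simp_all
next
  case (Par e f)
  then have "e \<in> subexprs e0" "f \<in> subexprs e0" using subexprs_child(3) by blast+
  with Par.IH Par.prems show ?case
    unfolding sem.simps by (intro lang_par_subset_gamma) simp_all
next
  case (Star e)
  then have "e \<in> subexprs e0" using subexprs_child(4) by blast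
  with Star.IH Star.prems show ?case
    unfolding sem.simps by (intro lang_star_subset[OF is_pa_spr_pa]) simp_all
next
  case (Dagger e)
  then have "e \<in> subexprs e0" using subexprs_child(5) by blast
  with Dagger.IH Dagger.prems show ?case
    unfolding sem.simps by (intro lang_dagger_subset[OF is_pa_spr_pa]) simp_all
qed simp

theorem mainTheorem2:
  fixes e :: "'a::finite spr"
  shows "\<exists>A :: (nat, 'a) pa. is_pa A \<and> well_nested A \<and> finitely_supported A
           \<and> (\<exists>q\<^sub>e\<in>states A. lang A q\<^sub>e = sem e)"
proof (intro exI[of _ "spr_pa e"] conjI bexI[of _ "spr_code e"])
  show "finitely_supported (spr_pa e)"
    by (simp add: finitely_supported_if_finite_states finite_subexprs)
  show "lang (spr_pa e) (spr_code e) = sem e"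
    by (simp add: lang_spr_pa_subset_sem sem_subset_lang_spr_pa subexprs_refl subset_antisym)
qed (simp_all add: is_pa_spr_pa well_nested_spr_pa subexprs_refl)

end
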